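(* Let $\Omega\subseteq\mathcal{A}_n$ be a closed set which is uniformly transversally star-shaped with respect to $S\in\mathcal{A}_n$. Then for every compact set $K\subseteq\mathcal{A}_n$, $\sup\langle n,S-R\rangle<0,$ where the supremum is taken over all $R\in K\cap\partial\Omega$ and all $n\in\mathcal{A}_n$ with $\|n\|=1$ and $\langle n,v\rangle\le0$ for all $v\in T_R\Omega$.
   Context: $\mathcal{A}_n$ is the (finite-dimensional Euclidean) space of algebraic curvature tensors on $\mathbb{R}^n$, with scalar product $\langle R,S\rangle=\mathrm{tr}(R\circ S)$. Tangent cone: $T_R\Omega:=\overline{\{\dot\gamma(0)\mid\gamma:(-\epsilon,\epsilon)\to\mathcal{A}_n\ \mathcal C^1,\ \gamma(0)=R,\ \gamma(t)\in\Omega\ \forall t\in[0,\epsilon)\}}$. A closed $\Omega$ is uniformly transversally star-shaped with respect to $S$ if for every compact $K\subseteq\mathcal{A}_n$ there is $r>0$ such that for every $R\in K\cap\partial\Omega$ there is $\varepsilon_0>0$ with $R+\varepsilon B_r(S-R)\subseteq\Omega$ for all $\varepsilon\in[0,\varepsilon_0)$, $B_r(v)$ the open ball of radius $r$ around $v$. *)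

theory Defs
  imports "HOL-Analysis.Analysis"
begin

type_synonym 'n tensor4 = "real^'n^'n^'n^'n"

definition alg_curv :: "('n::finite) tensor4 set" where
  "alg_curv = {R.
     (\<forall>i j k l. R$i$j$k$l = - (R$j$i$k$l)) \<and>
     (\<forall>i j k l. R$i$j$k$l = - (R$i$j$l$k)) \<and>
     (\<forall>i j k l. R$i$j$k$l = R$k$l$i$j) \<and>
     (\<forall>i j k l. R$i$j$k$l + R$j$k$i$l + R$k$i$j$l = 0)}"

text \<open>Scalar product tr(R o S), R and S viewed as operators on Lambda^2 R^n with the
  orthonormal basis e_i wedge e_j (i<j): this equals one quarter of the full contraction.\<close>
definition ac_inner :: "('n::finite) tensor4 \<Rightarrow> 'n tensor4 \<Rightarrow> real" where
  "ac_inner R S = (R \<bullet> S) / 4"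

definition ac_norm :: "('n::finite) tensor4 \<Rightarrow> real" where
  "ac_norm R = sqrt (ac_inner R R)"

definition ac_ball :: "real \<Rightarrow> ('n::finite) tensor4 \<Rightarrow> 'n tensor4 set" where
  "ac_ball r v = {w \<in> alg_curv. ac_norm (w - v) < r}"

definition ac_boundary :: "('n::finite) tensor4 set \<Rightarrow> 'n tensor4 set" where
  "ac_boundary \<Omega> = (top_of_set alg_curv) frontier_of \<Omega>"

definition tangent_cone :: "('n::finite) tensor4 set \<Rightarrow> 'n tensor4 \<Rightarrow> 'n tensor4 set" where
  "tangent_cone \<Omega> R = closure {v. \<exists>\<epsilon>>0. \<exists>\<gamma> \<gamma>'.
      (\<forall>t\<in>{-\<epsilon><..<\<epsilon>}. \<gamma> t \<in> alg_curv \<and> (\<gamma> has_vector_derivative \<gamma>' t) (at t)) \<and>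
      continuous_on {-\<epsilon><..<\<epsilon>} \<gamma>' \<and>
      \<gamma> 0 = R \<and> (\<forall>t\<in>{0..<\<epsilon>}. \<gamma> t \<in> \<Omega>) \<and> v = \<gamma>' 0}"

definition unif_transv_star_shaped :: "('n::finite) tensor4 set \<Rightarrow> 'n tensor4 \<Rightarrow> bool" where
  "unif_transv_star_shaped \<Omega> S \<longleftrightarrow>
     (\<forall>K. compact K \<and> K \<subseteq> alg_curv \<longrightarrow>
        (\<exists>r>0. \<forall>R\<in>K \<inter> ac_boundary \<Omega>. \<exists>\<epsilon>0>0. \<forall>\<epsilon>\<in>{0..<\<epsilon>0}.
            (\<lambda>w. R + \<epsilon> *\<^sub>R w) ` ac_ball r (S - R) \<subseteq> \<Omega>))"

end

theory Submission
  imports Defs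
begin

text \<open>If N is a unit normal to \<Omega> at a boundary point R, the ray condition puts every
  S - R + t N with 0 < t < r into the tangent cone at R, so 0 \<ge> \<langle>N, S - R\<rangle> + t.
  Hence \<langle>N, S - R\<rangle> \<le> -r, and r does not depend on R \<in> K.\<close>

lemma alg_curv_lin_comb:
  assumes "x \<in> alg_curv" "y \<in> alg_curv"
  shows "a *\<^sub>R x + b *\<^sub>R y \<in> alg_curv"
proof -
  have X: "\<And>i j k l. x$i$j$k$l = - (x$j$i$k$l)" "\<And>i j k l. x$i$j$k$l = - (x$i$j$l$k)"
    "\<And>i j k l. x$i$j$k$l = x$k$l$i$j" "\<And>i j k l. x$i$j$k$l + x$j$k$i$l + x$k$i$j$l = 0"
    using assms(1) unfolding alg_curv_def by blast+
  have Y: "\<And>i j k l. y$i$j$k$l = - (y$j$i$k$l)" "\<And>i j k l. y$i$j$k$l = - (y$i$j$l$k)"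
    "\<And>i j k l. y$i$j$k$l = y$k$l$i$j" "\<And>i j k l. y$i$j$k$l + y$j$k$i$l + y$k$i$j$l = 0"
    using assms(2) unfolding alg_curv_def by blast+
  let ?z = "a *\<^sub>R x + b *\<^sub>R y"
  show ?thesis unfolding alg_curv_def
  proof (intro CollectI conjI allI)
    fix i j k l
    show "?z$i$j$k$l = - (?z$j$i$k$l)" using X(1)[of i j k l] Y(1)[of i j k l] by simp
    show "?z$i$j$k$l = - (?z$i$j$l$k)" using X(2)[of i j k l] Y(2)[of i j k l] by simp
    show "?z$i$j$k$l = ?z$k$l$i$j" using X(3)[of i j k l] Y(3)[of i j k l] by simp
    have "?z$i$j$k$l + ?z$j$k$i$l + ?z$k$i$j$l
        = a * (x$i$j$k$l + x$j$k$i$l + x$k$i$j$l) + b * (y$i$j$k$l + y$j$k$i$l + y$k$i$j$l)"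
      by (simp add: algebra_simps)
    then show "?z$i$j$k$l + ?z$j$k$i$l + ?z$k$i$j$l = 0" using X(4) Y(4) by simp
  qed
qed

lemma subspace_alg_curv: "subspace (alg_curv :: ('n::finite) tensor4 set)"
proof (unfold subspace_def, intro conjI ballI allI)
  show "0 \<in> (alg_curv :: 'n tensor4 set)" unfolding alg_curv_def by simp
next
  fix x y :: "'n tensor4" assume "x \<in> alg_curv" "y \<in> alg_curv"
  then show "x + y \<in> alg_curv" using alg_curv_lin_comb[of x y 1 1] by simp
next
  fix c :: real and x :: "'n tensor4" assume "x \<in> alg_curv"
  then show "c *\<^sub>R x \<in> alg_curv" using alg_curv_lin_comb[of x x c 0] by simp
qed

lemma ray_in_tangent_cone:
  assumes "R \<in> alg_curv" "w \<in> alg_curv" "e0 > 0" "\<forall>e\<in>{0..<e0}. R + e *\<^sub>R w \<in> \<Omega>"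
  shows "w \<in> tangent_cone \<Omega> R"
proof -
  have on_line: "R + t *\<^sub>R w \<in> alg_curv" for t
    using assms(1,2) by (simp add: subspace_alg_curv subspace_add subspace_scale)
  have deriv: "((\<lambda>t. R + t *\<^sub>R w) has_vector_derivative w) (at t)" for t
    by (auto intro!: derivative_eq_intros)
  have "\<exists>\<gamma> \<gamma>'. (\<forall>t\<in>{-e0<..<e0}. \<gamma> t \<in> alg_curv \<and> (\<gamma> has_vector_derivative \<gamma>' t) (at t)) \<and>
      continuous_on {-e0<..<e0} \<gamma>' \<and> \<gamma> 0 = R \<and> (\<forall>t\<in>{0..<e0}. \<gamma> t \<in> \<Omega>) \<and> w = \<gamma>' 0"
    using on_line deriv assms(4) continuous_on_const[of "{-e0<..<e0}" w]
    by (intro exI[of _ "\<lambda>t. R + t *\<^sub>R w"] exI[of _ "\<lambda>_. w"]) simp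
  then show ?thesis
    unfolding tangent_cone_def using assms(3) by (blast intro: subsetD[OF closure_subset])
qed

lemma ac_inner_self_eq_1: "ac_norm N = 1 \<Longrightarrow> ac_inner N N = 1"
  unfolding ac_norm_def ac_inner_def
  by (metis real_sqrt_eq_1_iff)

lemma ac_norm_scaleR_unit: "ac_norm N = 1 \<Longrightarrow> t \<ge> 0 \<Longrightarrow> ac_norm (t *\<^sub>R N) = t"
proof -
  assume "ac_norm N = 1" "t \<ge> 0"
  then have "ac_inner (t *\<^sub>R N) (t *\<^sub>R N) = t\<^sup>2"
    using ac_inner_self_eq_1[of N] by (simp add: ac_inner_def power2_eq_square)
  then show ?thesis using \<open>t \<ge> 0\<close> by (simp add: ac_norm_def)
qed

lemma normal_inner_le_neg_radius:
  assumes "R \<in> alg_curv" "S \<in> alg_curv" "r > 0" "e0 > 0"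
    and ball_rays: "\<forall>\<epsilon>\<in>{0..<e0}. (\<lambda>w. R + \<epsilon> *\<^sub>R w) ` ac_ball r (S - R) \<subseteq> \<Omega>"
    and N: "N \<in> alg_curv" "ac_norm N = 1"
    and normal: "\<forall>v\<in>tangent_cone \<Omega> R. ac_inner N v \<le> 0"
  shows "ac_inner N (S - R) \<le> - r"
proof -
  have "t \<le> - ac_inner N (S - R)" if t: "0 < t" "t < r" for t
  proof -
    define w where "w = S - R + t *\<^sub>R N"
    have "w \<in> alg_curv"
      unfolding w_def using assms(1,2) N(1)
      by (simp add: subspace_alg_curv subspace_add subspace_diff subspace_scale)
    moreover have "ac_norm (w - (S - R)) < r"
      unfolding w_def using ac_norm_scaleR_unit[OF N(2)] t by simp
    ultimately have "w \<in> ac_ball r (S - R)" unfolding ac_ball_def by simp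
    then have "\<forall>e\<in>{0..<e0}. R + e *\<^sub>R w \<in> \<Omega>" using ball_rays by blast
    then have "ac_inner N w \<le> 0"
      using normal ray_in_tangent_cone[OF assms(1) \<open>w \<in> alg_curv\<close> assms(4)] by blast
    moreover have "ac_inner N w = ac_inner N (S - R) + t * ac_inner N N"
      unfolding w_def ac_inner_def by (simp add: inner_add_right add_divide_distrib)
    ultimately show ?thesis using ac_inner_self_eq_1[OF N(2)] by simp
  qed
  then have "r \<le> - ac_inner N (S - R)" by (rule dense_le_bounded[OF assms(3)])
  then show ?thesis by simp
qed

theorem lemma4p7:
  fixes \<Omega> :: "('n::finite) tensor4 set" and S :: "'n tensor4" and K :: "'n tensor4 set"
  assumes "\<Omega> \<subseteq> alg_curv" and "closed \<Omega>" and "S \<in> alg_curv"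
    and "unif_transv_star_shaped \<Omega> S"
    and "compact K" and "K \<subseteq> alg_curv"
  shows "(SUP (R, N) \<in> {(R, N). R \<in> K \<inter> ac_boundary \<Omega> \<and> N \<in> alg_curv \<and> ac_norm N = 1 \<and>
              (\<forall>v\<in>tangent_cone \<Omega> R. ac_inner N v \<le> 0)}.
            ereal (ac_inner N (S - R))) < 0"
proof -
  obtain r where r: "r > 0" and rays: "\<forall>R\<in>K \<inter> ac_boundary \<Omega>. \<exists>e0>0. \<forall>\<epsilon>\<in>{0..<e0}.
      (\<lambda>w. R + \<epsilon> *\<^sub>R w) ` ac_ball r (S - R) \<subseteq> \<Omega>"
    using assms(4)[unfolded unif_transv_star_shaped_def, rule_format, OF conjI[OF assms(5,6)]]
    by blast
  have bound: "ac_inner N (S - R) \<le> - r"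
    if R: "R \<in> K \<inter> ac_boundary \<Omega>" and N: "N \<in> alg_curv" "ac_norm N = 1"
      and normal: "\<forall>v\<in>tangent_cone \<Omega> R. ac_inner N v \<le> 0" for R N
  proof -
    obtain e0 where "e0 > 0" "\<forall>\<epsilon>\<in>{0..<e0}. (\<lambda>w. R + \<epsilon> *\<^sub>R w) ` ac_ball r (S - R) \<subseteq> \<Omega>"
      using rays R by blast
    moreover have "R \<in> alg_curv" using R assms(6) by blast
    ultimately show ?thesis
      using normal_inner_le_neg_radius[OF _ assms(3) r _ _ N normal] by blast
  qed
  have "(SUP (R, N) \<in> {(R, N). R \<in> K \<inter> ac_boundary \<Omega> \<and> N \<in> alg_curv \<and> ac_norm N = 1 \<and>
              (\<forall>v\<in>tangent_cone \<Omega> R. ac_inner N v \<le> 0)}.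
            ereal (ac_inner N (S - R))) \<le> ereal (- r)"
    by (rule SUP_least) (clarsimp simp: bound)
  also have "\<dots> < 0" using r by simp
  finally show ?thesis .
qed

end
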